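(* Let $\mathbf{C}$ be a small groupoid with set of objects $\mathbf{C_0}$, set of morphisms $\mathbf{C_1}$, and source and target maps $s,t \colon \mathbf{C_1} \to \mathbf{C_0}$. Let $u$ be an object of $\mathbf{C}$ and let $h \colon \mathbf{C_0} \to \mathbf{C_1}$ be a map assigning to each object $e$ a morphism $h(e) \colon e \to u$, with $h(u) = \mathrm{id}_u$. For objects $e,e'$ put $h_{e,e'} = h(e')^{-1}h(e) \colon e \to e'$, and for each bijection $\sigma$ of $\mathbf{C_0}$ let $h_\sigma$ be the bisection $e \mapsto h_{e,\sigma(e)}$. Let $N$ be the subgroup of $\mathrm{Bis}(\mathbf{C})$ consisting of the bisections $n$ with $t\circ n = \mathrm{id}_{\mathbf{C_0}}$ (so $N \cong \prod_{e} \mathrm{End}(e)$), and let $H = \{h_\sigma : \sigma \text{ a bijection of } \mathbf{C_0}\}$. Then $\mathrm{Bis}(\mathbf{C})$ is generated by its subgroups $N$ and $H$; moreover $H$ acts on $N$ (by group automorphisms), and $\mathrm{Bis}(\mathbf{C})$ is isomorphic to the corresponding semidirect product $N \rtimes H$.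
   Context: A groupoid is a category in which every morphism is invertible. A bisection of $\mathbf{C}$ is a map $b \colon \mathbf{C_0} \to \mathbf{C_1}$ such that $s \circ b$ is the identity of $\mathbf{C_0}$ and $t \circ b \colon \mathbf{C_0} \to \mathbf{C_0}$ is a bijection. Bisections form a group $\mathrm{Bis}(\mathbf{C})$ under the composition $(b' \star b)(e) = b'(t(b(e))) \circ b(e)$, with inverse $b^{-1}(e) = b((t\circ b)^{-1}(e))^{-1}$. The set $H$ of bisections $h_\sigma$ is a subgroup of $\mathrm{Bis}(\mathbf{C})$ isomorphic to the group of bijections of $\mathbf{C_0}$. *)

theory Defs
  imports "HOL-Algebra.Algebra" "HOL-Library.FuncSet"
begin

text \<open>A small category/groupoid given by its set of objects, set of morphisms,
 source, target, composition (cmp g f = g o f, defined when src g = tgt f) and identities.\<close>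
record ('o, 'm) smallcat =
  Obj :: "'o set"
  Arr :: "'m set"
  src :: "'m \<Rightarrow> 'o"
  tgt :: "'m \<Rightarrow> 'o"
  cmp :: "'m \<Rightarrow> 'm \<Rightarrow> 'm"
  idm :: "'o \<Rightarrow> 'm"

definition is_category :: "('o, 'm) smallcat \<Rightarrow> bool" where
  "is_category C \<longleftrightarrow>
     (\<forall>f\<in>Arr C. src C f \<in> Obj C \<and> tgt C f \<in> Obj C) \<and>
     (\<forall>e\<in>Obj C. idm C e \<in> Arr C \<and> src C (idm C e) = e \<and> tgt C (idm C e) = e) \<and>
     (\<forall>f\<in>Arr C. \<forall>g\<in>Arr C. src C g = tgt C f \<longrightarrow>
        cmp C g f \<in> Arr C \<and> src C (cmp C g f) = src C f \<and> tgt C (cmp C g f) = tgt C g) \<and>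
     (\<forall>f\<in>Arr C. \<forall>g\<in>Arr C. \<forall>k\<in>Arr C. src C g = tgt C f \<longrightarrow> src C k = tgt C g \<longrightarrow>
        cmp C k (cmp C g f) = cmp C (cmp C k g) f) \<and>
     (\<forall>f\<in>Arr C. cmp C (idm C (tgt C f)) f = f \<and> cmp C f (idm C (src C f)) = f)"

definition is_inverse :: "('o, 'm) smallcat \<Rightarrow> 'm \<Rightarrow> 'm \<Rightarrow> bool" where
  "is_inverse C f g \<longleftrightarrow> g \<in> Arr C \<and> src C g = tgt C f \<and> tgt C g = src C f \<and>
     cmp C g f = idm C (src C f) \<and> cmp C f g = idm C (tgt C f)"

definition is_groupoid :: "('o, 'm) smallcat \<Rightarrow> bool" where
  "is_groupoid C \<longleftrightarrow> is_category C \<and> (\<forall>f\<in>Arr C. \<exists>g. is_inverse C f g)"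

definition minv :: "('o, 'm) smallcat \<Rightarrow> 'm \<Rightarrow> 'm" where
  "minv C f = (SOME g. is_inverse C f g)"

definition bisections :: "('o, 'm) smallcat \<Rightarrow> ('o \<Rightarrow> 'm) set" where
  "bisections C = {b \<in> Obj C \<rightarrow>\<^sub>E Arr C. (\<forall>e\<in>Obj C. src C (b e) = e) \<and>
                    bij_betw (\<lambda>e. tgt C (b e)) (Obj C) (Obj C)}"

definition Bis :: "('o, 'm) smallcat \<Rightarrow> ('o \<Rightarrow> 'm) monoid" where
  "Bis C = \<lparr> carrier = bisections C,
             monoid.mult = (\<lambda>b' b. \<lambda>e\<in>Obj C. cmp C (b' (tgt C (b e))) (b e)),
             monoid.one = (\<lambda>e\<in>Obj C. idm C e) \<rparr>"

definition hpair :: "('o, 'm) smallcat \<Rightarrow> ('o \<Rightarrow> 'm) \<Rightarrow> 'o \<Rightarrow> 'o \<Rightarrow> 'm" where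
  "hpair C h e e' = cmp C (minv C (h e')) (h e)"

definition hsigma :: "('o, 'm) smallcat \<Rightarrow> ('o \<Rightarrow> 'm) \<Rightarrow> ('o \<Rightarrow> 'o) \<Rightarrow> ('o \<Rightarrow> 'm)" where
  "hsigma C h \<sigma> = (\<lambda>e\<in>Obj C. hpair C h e (\<sigma> e))"

definition Nsub :: "('o, 'm) smallcat \<Rightarrow> ('o \<Rightarrow> 'm) set" where
  "Nsub C = {n \<in> bisections C. \<forall>e\<in>Obj C. tgt C (n e) = e}"

definition Hsub :: "('o, 'm) smallcat \<Rightarrow> ('o \<Rightarrow> 'm) \<Rightarrow> ('o \<Rightarrow> 'm) set" where
  "Hsub C h = {hsigma C h \<sigma> | \<sigma>. bij_betw \<sigma> (Obj C) (Obj C)}"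

definition semidirect_product ::
  "('a, 'c) monoid_scheme \<Rightarrow> ('b, 'd) monoid_scheme \<Rightarrow> ('b \<Rightarrow> 'a \<Rightarrow> 'a) \<Rightarrow> ('a \<times> 'b) monoid" where
  "semidirect_product G K \<phi> =
     \<lparr> carrier = carrier G \<times> carrier K,
       monoid.mult = (\<lambda>(n, k) (n', k'). (n \<otimes>\<^bsub>G\<^esub> \<phi> k n', k \<otimes>\<^bsub>K\<^esub> k')),
       monoid.one = (\<one>\<^bsub>G\<^esub>, \<one>\<^bsub>K\<^esub>) \<rparr>"

definition conj_act :: "('o, 'm) smallcat \<Rightarrow> ('o \<Rightarrow> 'm) \<Rightarrow> ('o \<Rightarrow> 'm) \<Rightarrow> ('o \<Rightarrow> 'm)" where
  "conj_act C x n = x \<otimes>\<^bsub>Bis C\<^esub> n \<otimes>\<^bsub>Bis C\<^esub> inv\<^bsub>Bis C\<^esub> x"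

end

theory Submission
  imports Defs
begin

text \<open>The target map b \<mapsto> t \<circ> b is a homomorphism from Bis(C) onto the group of
  bijections of C0 whose kernel is N, and \<sigma> \<mapsto> h_\<sigma> is a homomorphism splitting it, since
  h_{e',e''} h_{e,e'} = h_{e,e''}. A homomorphism \<phi> with a splitting s presents its domain as
  the semidirect product of the kernel and the image of s, acting by conjugation, via
  g \<mapsto> (g s(\<phi> g)\<inverse>, s(\<phi> g)).\<close>

lemma (in group) inv_mult_cancel_left [simp]:
  "x \<in> carrier G \<Longrightarrow> y \<in> carrier G \<Longrightarrow> inv x \<otimes> (x \<otimes> y) = y"
  by (simp flip: m_assoc)

lemma (in group) mult_inv_cancel_left [simp]:
  "x \<in> carrier G \<Longrightarrow> y \<in> carrier G \<Longrightarrow> x \<otimes> (inv x \<otimes> y) = y"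
  by (simp flip: m_assoc)

lemma (in group) conjugation_mult:
  assumes "x \<in> carrier G" "y \<in> carrier G" "n \<in> carrier G"
  shows "x \<otimes> y \<otimes> n \<otimes> inv (x \<otimes> y) = x \<otimes> (y \<otimes> n \<otimes> inv y) \<otimes> inv x"
  using assms by (simp add: m_assoc inv_mult_group)

lemma (in normal) conjugation_restrict_iso:
  assumes x: "x \<in> carrier G"
  shows "restrict (\<lambda>n. x \<otimes> n \<otimes> inv x) H \<in> iso (G\<lparr>carrier := H\<rparr>) (G\<lparr>carrier := H\<rparr>)"
proof (rule isoI)
  show "restrict (\<lambda>n. x \<otimes> n \<otimes> inv x) H \<in> hom (G\<lparr>carrier := H\<rparr>) (G\<lparr>carrier := H\<rparr>)"
    using x by (auto simp: hom_def inv_op_closed2) (simp add: m_assoc mem_carrier)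
  have "bij_betw (\<lambda>n. x \<otimes> n \<otimes> inv x) H H"
  proof (rule bij_betw_byWitness[where f' = "\<lambda>n. inv x \<otimes> n \<otimes> x"])
    show "\<forall>n\<in>H. inv x \<otimes> (x \<otimes> n \<otimes> inv x) \<otimes> x = n"
      and "\<forall>n\<in>H. x \<otimes> (inv x \<otimes> n \<otimes> x) \<otimes> inv x = n"
      using x by (auto simp: m_assoc mem_carrier)
    show "(\<lambda>n. x \<otimes> n \<otimes> inv x) ` H \<subseteq> H" and "(\<lambda>n. inv x \<otimes> n \<otimes> x) ` H \<subseteq> H"
      using x by (auto simp: inv_op_closed1 inv_op_closed2)
  qed
  then show "bij_betw (restrict (\<lambda>n. x \<otimes> n \<otimes> inv x) H) (carrier (G\<lparr>carrier := H\<rparr>)) (carrier (G\<lparr>carrier := H\<rparr>))"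
    by (simp add: bij_betw_restrict_eq)
qed

locale split_group_hom = group_hom +
  fixes s
  assumes section_hom: "s \<in> hom H G"
    and section_right_inverse: "\<And>k. k \<in> carrier H \<Longrightarrow> h (s k) = k"
begin

sublocale S: group_hom H G s
  by (simp add: group_hom_def group_hom_axioms_def section_hom G.group_axioms H.group_axioms)

lemma section_image_subgroup: "subgroup (s ` carrier H) G"
  by (rule S.img_is_subgroup)

lemma mult_inv_section_in_kernel:
  assumes g: "g \<in> carrier G"
  shows "g \<otimes> inv (s (h g)) \<in> kernel G H h"
  using g section_right_inverse[of "h g"] by (simp add: kernel_def)

lemma generate_kernel_section_image: "generate G (kernel G H h \<union> s ` carrier H) = carrier G"
proof
  show "generate G (kernel G H h \<union> s ` carrier H) \<subseteq> carrier G"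
    by (rule G.generate_incl) (auto simp: kernel_def)
  show "carrier G \<subseteq> generate G (kernel G H h \<union> s ` carrier H)"
  proof
    fix g assume g: "g \<in> carrier G"
    then have "g = (g \<otimes> inv (s (h g))) \<otimes> s (h g)"
      by (simp add: G.m_assoc)
    with g mult_inv_section_in_kernel[OF g] show "g \<in> generate G (kernel G H h \<union> s ` carrier H)"
      by (metis UnI1 UnI2 generate.eng generate.incl hom_closed image_eqI)
  qed
qed

theorem iso_semidirect_product:
  "G \<cong> semidirect_product (G\<lparr>carrier := kernel G H h\<rparr>) (G\<lparr>carrier := s ` carrier H\<rparr>)
         (\<lambda>x n. x \<otimes> n \<otimes> inv x)"
  (is "G \<cong> ?SD")
proof -
  let ?K = "kernel G H h"
  define decompose where "decompose g = (g \<otimes> inv (s (h g)), s (h g))" for g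
  have carrier_SD: "carrier ?SD = ?K \<times> s ` carrier H"
    by (simp add: semidirect_product_def)
  have K: "?K \<subseteq> carrier G"
    by (auto simp: kernel_def)
  have "decompose \<in> hom G ?SD"
  proof (rule homI)
    show "decompose g \<in> carrier ?SD" if "g \<in> carrier G" for g
      using that mult_inv_section_in_kernel by (simp add: decompose_def carrier_SD)
    show "decompose (g \<otimes> g') = decompose g \<otimes>\<^bsub>?SD\<^esub> decompose g'"
      if "g \<in> carrier G" "g' \<in> carrier G" for g g'
      using that by (simp add: decompose_def semidirect_product_def G.m_assoc G.inv_mult_group)
  qed
  moreover have "bij_betw decompose (carrier G) (carrier ?SD)"
  proof (rule bij_betw_byWitness[where f' = "\<lambda>(n, k). n \<otimes> k"])
    show "\<forall>g\<in>carrier G. (\<lambda>(n, k). n \<otimes> k) (decompose g) = g"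
      by (simp add: decompose_def G.m_assoc)
    show "\<forall>p\<in>carrier ?SD. decompose ((\<lambda>(n, k). n \<otimes> k) p) = p"
    proof
      fix p assume "p \<in> carrier ?SD"
      then obtain n k where p: "p = (n, s k)" and n: "n \<in> ?K" and k: "k \<in> carrier H"
        by (auto simp: carrier_SD)
      \<comment> \<open>The kernel component does not change the image under h, so the section recovers s k.\<close>
      have "h (n \<otimes> s k) = k"
        using n k by (simp add: kernel_def section_right_inverse)
      then show "decompose ((\<lambda>(n, k). n \<otimes> k) p) = p"
        using n k K by (auto simp: p decompose_def G.m_assoc)
    qed
    show "decompose ` carrier G \<subseteq> carrier ?SD"
      using mult_inv_section_in_kernel by (auto simp: decompose_def carrier_SD)
    show "(\<lambda>(n, k). n \<otimes> k) ` carrier ?SD \<subseteq> carrier G"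
      using K by (auto simp: carrier_SD)
  qed
  ultimately show ?thesis
    unfolding is_iso_def iso_def by blast
qed

end

definition target_perm :: "('o, 'm) smallcat \<Rightarrow> ('o \<Rightarrow> 'm) \<Rightarrow> 'o \<Rightarrow> 'o" where
  "target_perm C b = (\<lambda>e\<in>Obj C. tgt C (b e))"

lemma carrier_BijGroup: "carrier (BijGroup S) = Bij S"
  by (simp add: BijGroup_def)

locale groupoid =
  fixes C :: "('o, 'm) smallcat"
  assumes is_groupoid: "is_groupoid C"
begin

lemma is_category: "is_category C"
  using is_groupoid by (simp add: is_groupoid_def)

lemma tgt_arr: "f \<in> Arr C \<Longrightarrow> tgt C f \<in> Obj C"
  and idm_arr: "e \<in> Obj C \<Longrightarrow> idm C e \<in> Arr C"
  and src_idm: "e \<in> Obj C \<Longrightarrow> src C (idm C e) = e"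
  and tgt_idm: "e \<in> Obj C \<Longrightarrow> tgt C (idm C e) = e"
  and cmp_idm_left: "f \<in> Arr C \<Longrightarrow> cmp C (idm C (tgt C f)) f = f"
  using is_category by (simp_all add: is_category_def)

lemma
  assumes "f \<in> Arr C" "g \<in> Arr C" "src C g = tgt C f"
  shows cmp_arr: "cmp C g f \<in> Arr C"
    and src_cmp: "src C (cmp C g f) = src C f"
    and tgt_cmp: "tgt C (cmp C g f) = tgt C g"
  using is_category assms unfolding is_category_def by blast+

lemma cmp_assoc:
  "\<lbrakk>f \<in> Arr C; g \<in> Arr C; k \<in> Arr C; src C g = tgt C f; src C k = tgt C g\<rbrakk>
    \<Longrightarrow> cmp C k (cmp C g f) = cmp C (cmp C k g) f"
  using is_category unfolding is_category_def by blast

lemma minv_is_inverse: "f \<in> Arr C \<Longrightarrow> is_inverse C f (minv C f)"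
  unfolding minv_def using is_groupoid unfolding is_groupoid_def by (metis someI_ex)

lemma
  assumes "f \<in> Arr C"
  shows minv_arr: "minv C f \<in> Arr C"
    and src_minv: "src C (minv C f) = tgt C f"
    and tgt_minv: "tgt C (minv C f) = src C f"
    and cmp_minv_left: "cmp C (minv C f) f = idm C (src C f)"
    and cmp_minv_right: "cmp C f (minv C f) = idm C (tgt C f)"
  using minv_is_inverse[OF assms] by (simp_all add: is_inverse_def)

lemma bisectionsI:
  assumes "b \<in> extensional (Obj C)" "\<And>e. e \<in> Obj C \<Longrightarrow> b e \<in> Arr C"
    "\<And>e. e \<in> Obj C \<Longrightarrow> src C (b e) = e" "bij_betw (\<lambda>e. tgt C (b e)) (Obj C) (Obj C)"
  shows "b \<in> bisections C"
  using assms by (auto simp: bisections_def PiE_def Pi_def)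

lemma
  assumes "b \<in> bisections C"
  shows bisections_extensional: "b \<in> extensional (Obj C)"
    and bisections_tgt_bij: "bij_betw (\<lambda>e. tgt C (b e)) (Obj C) (Obj C)"
  using assms by (auto simp: bisections_def PiE_def)

lemma
  assumes "b \<in> bisections C" "e \<in> Obj C"
  shows bisections_arr: "b e \<in> Arr C"
    and bisections_src: "src C (b e) = e"
    and bisections_tgt: "tgt C (b e) \<in> Obj C"
  using assms by (auto simp: bisections_def intro: tgt_arr)

lemma carrier_Bis: "carrier (Bis C) = bisections C"
  by (simp add: Bis_def)

lemma Bis_mult_apply: "e \<in> Obj C \<Longrightarrow> (b' \<otimes>\<^bsub>Bis C\<^esub> b) e = cmp C (b' (tgt C (b e))) (b e)"
  and Bis_mult_extensional: "b' \<otimes>\<^bsub>Bis C\<^esub> b \<in> extensional (Obj C)"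
  and Bis_one_apply: "e \<in> Obj C \<Longrightarrow> \<one>\<^bsub>Bis C\<^esub> e = idm C e"
  and Bis_one_extensional: "\<one>\<^bsub>Bis C\<^esub> \<in> extensional (Obj C)"
  by (simp_all add: Bis_def)

lemma
  assumes b: "b \<in> bisections C" and b': "b' \<in> bisections C" and e: "e \<in> Obj C"
  shows Bis_mult_arr: "(b' \<otimes>\<^bsub>Bis C\<^esub> b) e \<in> Arr C"
    and Bis_mult_src: "src C ((b' \<otimes>\<^bsub>Bis C\<^esub> b) e) = e"
    and Bis_mult_tgt: "tgt C ((b' \<otimes>\<^bsub>Bis C\<^esub> b) e) = tgt C (b' (tgt C (b e)))"
  using b b' e bisections_arr bisections_src bisections_tgt
  by (simp_all add: Bis_mult_apply cmp_arr src_cmp tgt_cmp)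

lemma Bis_mult_closed:
  assumes b': "b' \<in> bisections C" and b: "b \<in> bisections C"
  shows "b' \<otimes>\<^bsub>Bis C\<^esub> b \<in> bisections C"
proof (rule bisectionsI)
  have "bij_betw ((\<lambda>e. tgt C (b' e)) \<circ> (\<lambda>e. tgt C (b e))) (Obj C) (Obj C)"
    using bij_betw_trans[OF bisections_tgt_bij[OF b] bisections_tgt_bij[OF b']] .
  then show "bij_betw (\<lambda>e. tgt C ((b' \<otimes>\<^bsub>Bis C\<^esub> b) e)) (Obj C) (Obj C)"
    by (rule bij_betw_cong[THEN iffD1, rotated]) (simp add: Bis_mult_tgt[OF b b'])
qed (simp_all add: Bis_mult_extensional Bis_mult_arr[OF b b'] Bis_mult_src[OF b b'])

lemma Bis_one_closed: "\<one>\<^bsub>Bis C\<^esub> \<in> bisections C"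
proof (rule bisectionsI)
  show "bij_betw (\<lambda>e. tgt C (\<one>\<^bsub>Bis C\<^esub> e)) (Obj C) (Obj C)"
    by (rule bij_betw_cong[THEN iffD1, OF _ bij_betw_id])
      (simp add: Bis_one_apply tgt_idm)
qed (simp_all add: Bis_one_extensional Bis_one_apply idm_arr src_idm)

lemma Bis_mult_assoc:
  assumes x: "x \<in> bisections C" and y: "y \<in> bisections C" and z: "z \<in> bisections C"
  shows "x \<otimes>\<^bsub>Bis C\<^esub> y \<otimes>\<^bsub>Bis C\<^esub> z = x \<otimes>\<^bsub>Bis C\<^esub> (y \<otimes>\<^bsub>Bis C\<^esub> z)"
proof (rule extensionalityI[OF Bis_mult_extensional Bis_mult_extensional])
  fix e assume e: "e \<in> Obj C"
  define e1 where "e1 = tgt C (z e)"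
  define e2 where "e2 = tgt C (y e1)"
  have e1: "e1 \<in> Obj C" and e2: "e2 \<in> Obj C"
    using bisections_tgt x y z e by (simp_all add: e1_def e2_def)
  have "(x \<otimes>\<^bsub>Bis C\<^esub> y \<otimes>\<^bsub>Bis C\<^esub> z) e = cmp C (cmp C (x e2) (y e1)) (z e)"
    using e e1 by (simp add: Bis_mult_apply e1_def e2_def)
  also have "\<dots> = cmp C (x e2) (cmp C (y e1) (z e))"
    using x y z e e1 e2 bisections_arr bisections_src
    by (simp add: cmp_assoc e1_def e2_def)
  also have "\<dots> = (x \<otimes>\<^bsub>Bis C\<^esub> (y \<otimes>\<^bsub>Bis C\<^esub> z)) e"
    using e Bis_mult_tgt[OF z y e] by (simp add: Bis_mult_apply e1_def e2_def)
  finally show "(x \<otimes>\<^bsub>Bis C\<^esub> y \<otimes>\<^bsub>Bis C\<^esub> z) e = (x \<otimes>\<^bsub>Bis C\<^esub> (y \<otimes>\<^bsub>Bis C\<^esub> z)) e" .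
qed

lemma Bis_l_one: "b \<in> bisections C \<Longrightarrow> \<one>\<^bsub>Bis C\<^esub> \<otimes>\<^bsub>Bis C\<^esub> b = b"
  by (rule extensionalityI[OF Bis_mult_extensional bisections_extensional])
    (simp_all add: Bis_mult_apply Bis_one_apply bisections_arr bisections_tgt cmp_idm_left)

lemma Bis_l_inv_ex:
  assumes b: "b \<in> bisections C"
  shows "\<exists>b'\<in>bisections C. b' \<otimes>\<^bsub>Bis C\<^esub> b = \<one>\<^bsub>Bis C\<^esub>"
proof -
  define \<tau> where "\<tau> = inv_into (Obj C) (\<lambda>e. tgt C (b e))"
  have \<tau>: "bij_betw \<tau> (Obj C) (Obj C)"
    unfolding \<tau>_def by (rule bij_betw_inv_into[OF bisections_tgt_bij[OF b]])
  have \<tau>_Obj: "\<tau> e \<in> Obj C" if "e \<in> Obj C" for e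
    using \<tau> that bij_betwE by blast
  have tgt_b_\<tau>: "tgt C (b (\<tau> e)) = e" if "e \<in> Obj C" for e
    using bij_betw_inv_into_right[OF bisections_tgt_bij[OF b] that] by (simp add: \<tau>_def)
  have \<tau>_tgt_b: "\<tau> (tgt C (b e)) = e" if "e \<in> Obj C" for e
    using bij_betw_inv_into_left[OF bisections_tgt_bij[OF b] that] by (simp add: \<tau>_def)
  \<comment> \<open>b' e is the inverse of the arrow of b that ends in e\<close>
  define b' where "b' = (\<lambda>e\<in>Obj C. minv C (b (\<tau> e)))"
  have "b' \<in> bisections C"
  proof (rule bisectionsI)
    show "bij_betw (\<lambda>e. tgt C (b' e)) (Obj C) (Obj C)"
      by (rule bij_betw_cong[THEN iffD1, OF _ \<tau>])
        (simp add: b'_def tgt_minv \<tau>_Obj bisections_arr bisections_src b)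
  qed (simp_all add: b'_def minv_arr src_minv \<tau>_Obj bisections_arr b tgt_b_\<tau>)
  moreover have "b' \<otimes>\<^bsub>Bis C\<^esub> b = \<one>\<^bsub>Bis C\<^esub>"
    by (rule extensionalityI[OF Bis_mult_extensional Bis_one_extensional])
      (simp add: Bis_mult_apply Bis_one_apply b'_def b bisections_tgt bisections_arr
        bisections_src \<tau>_tgt_b cmp_minv_left)
  ultimately show ?thesis
    by blast
qed

lemma group_Bis: "group (Bis C)"
  by (rule groupI)
    (simp_all add: carrier_Bis Bis_mult_closed Bis_one_closed Bis_mult_assoc Bis_l_one Bis_l_inv_ex)

lemma target_perm_hom: "target_perm C \<in> hom (Bis C) (BijGroup (Obj C))"
proof (rule homI)
  show "target_perm C b \<in> carrier (BijGroup (Obj C))" if "b \<in> carrier (Bis C)" for b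
    using that bisections_tgt_bij
    by (simp add: BijGroup_def Bij_def target_perm_def carrier_Bis bij_betw_restrict_eq)
  then show "target_perm C (b' \<otimes>\<^bsub>Bis C\<^esub> b)
      = target_perm C b' \<otimes>\<^bsub>BijGroup (Obj C)\<^esub> target_perm C b"
    if "b' \<in> carrier (Bis C)" "b \<in> carrier (Bis C)" for b' b
    using that
    by (auto simp: BijGroup_def compose_def target_perm_def carrier_Bis Bis_mult_tgt bisections_tgt)
qed

lemma kernel_target_perm: "kernel (Bis C) (BijGroup (Obj C)) (target_perm C) = Nsub C"
  by (auto simp: kernel_def Nsub_def BijGroup_def target_perm_def carrier_Bis fun_eq_iff
      restrict_def split: if_splits)

end

locale groupoid_arrows_to_base = groupoid +
  fixes u :: 'o and h :: "'o \<Rightarrow> 'm"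
  assumes h_arr: "e \<in> Obj C \<Longrightarrow> h e \<in> Arr C"
    and src_h: "e \<in> Obj C \<Longrightarrow> src C (h e) = e"
    and tgt_h: "e \<in> Obj C \<Longrightarrow> tgt C (h e) = u"
begin

lemma
  assumes "e \<in> Obj C" "e' \<in> Obj C"
  shows hpair_arr: "hpair C h e e' \<in> Arr C"
    and src_hpair: "src C (hpair C h e e') = e"
    and tgt_hpair: "tgt C (hpair C h e e') = e'"
  using assms
  by (simp_all add: hpair_def h_arr src_h tgt_h minv_arr src_minv tgt_minv cmp_arr src_cmp tgt_cmp)

lemma hpair_cmp:
  assumes e: "e \<in> Obj C" and e': "e' \<in> Obj C" and e'': "e'' \<in> Obj C"
  shows "cmp C (hpair C h e' e'') (hpair C h e e') = hpair C h e e''"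
proof -
  have "cmp C (hpair C h e' e'') (hpair C h e e')
      = cmp C (minv C (h e'')) (cmp C (cmp C (h e') (minv C (h e'))) (h e))"
    using assms
    by (simp add: hpair_def cmp_assoc h_arr src_h tgt_h minv_arr src_minv tgt_minv cmp_arr src_cmp tgt_cmp)
  also have "\<dots> = hpair C h e e''"
    using assms cmp_idm_left[OF h_arr[OF e]]
    by (simp add: hpair_def cmp_minv_right h_arr tgt_h)
  finally show ?thesis .
qed

lemma hsigma_restrict: "hsigma C h (restrict \<sigma> (Obj C)) = hsigma C h \<sigma>"
  unfolding hsigma_def by (rule restrict_ext) simp

lemma hsigma_bisection:
  assumes \<sigma>: "bij_betw \<sigma> (Obj C) (Obj C)"
  shows "hsigma C h \<sigma> \<in> bisections C"
proof (rule bisectionsI)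
  have \<sigma>_Obj: "\<sigma> e \<in> Obj C" if "e \<in> Obj C" for e
    using \<sigma> that bij_betwE by blast
  show "bij_betw (\<lambda>e. tgt C (hsigma C h \<sigma> e)) (Obj C) (Obj C)"
    by (rule bij_betw_cong[THEN iffD1, OF _ \<sigma>]) (simp add: hsigma_def tgt_hpair \<sigma>_Obj)
  show "hsigma C h \<sigma> e \<in> Arr C" "src C (hsigma C h \<sigma> e) = e" if "e \<in> Obj C" for e
    using that \<sigma>_Obj by (simp_all add: hsigma_def hpair_arr src_hpair)
qed (simp add: hsigma_def)

lemma hsigma_hom: "hsigma C h \<in> hom (BijGroup (Obj C)) (Bis C)"
proof (rule homI)
  show "hsigma C h \<sigma> \<in> carrier (Bis C)" if "\<sigma> \<in> carrier (BijGroup (Obj C))" for \<sigma>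
    using that hsigma_bisection by (simp add: BijGroup_def Bij_def carrier_Bis)
  show "hsigma C h (\<sigma> \<otimes>\<^bsub>BijGroup (Obj C)\<^esub> \<tau>) = hsigma C h \<sigma> \<otimes>\<^bsub>Bis C\<^esub> hsigma C h \<tau>"
    if "\<sigma> \<in> carrier (BijGroup (Obj C))" "\<tau> \<in> carrier (BijGroup (Obj C))" for \<sigma> \<tau>
  proof (rule extensionalityI[OF _ Bis_mult_extensional])
    have "\<sigma> e \<in> Obj C" "\<tau> e \<in> Obj C" if "e \<in> Obj C" for e
      using \<open>\<sigma> \<in> _\<close> \<open>\<tau> \<in> _\<close> that by (auto simp: BijGroup_def dest: Bij_imp_funcset)
    then show "hsigma C h (\<sigma> \<otimes>\<^bsub>BijGroup (Obj C)\<^esub> \<tau>) e = (hsigma C h \<sigma> \<otimes>\<^bsub>Bis C\<^esub> hsigma C h \<tau>) e"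
      if "e \<in> Obj C" for e
      using that \<open>\<sigma> \<in> _\<close> \<open>\<tau> \<in> _\<close>
      by (simp add: BijGroup_def compose_def hsigma_def Bis_mult_apply tgt_hpair hpair_cmp)
  qed (simp add: hsigma_def)
qed

lemma target_perm_hsigma:
  assumes \<sigma>: "\<sigma> \<in> Bij (Obj C)"
  shows "target_perm C (hsigma C h \<sigma>) = \<sigma>"
proof (rule extensionalityI[OF _ Bij_imp_extensional[OF \<sigma>]])
  show "target_perm C (hsigma C h \<sigma>) e = \<sigma> e" if "e \<in> Obj C" for e
    using that funcset_mem[OF Bij_imp_funcset[OF \<sigma>] that]
    by (simp add: target_perm_def hsigma_def tgt_hpair)
qed (simp add: target_perm_def)

lemma Hsub_eq_image: "Hsub C h = hsigma C h ` carrier (BijGroup (Obj C))"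
proof -
  have "hsigma C h \<sigma> \<in> hsigma C h ` Bij (Obj C)" if "bij_betw \<sigma> (Obj C) (Obj C)" for \<sigma>
  proof (rule image_eqI)
    show "hsigma C h \<sigma> = hsigma C h (restrict \<sigma> (Obj C))"
      by (rule hsigma_restrict[symmetric])
    show "restrict \<sigma> (Obj C) \<in> Bij (Obj C)"
      using that by (simp add: Bij_def bij_betw_restrict_eq)
  qed
  then show ?thesis
    by (auto simp: Hsub_def Bij_def carrier_BijGroup)
qed

lemma split_group_hom_target_perm:
  "split_group_hom (Bis C) (BijGroup (Obj C)) (target_perm C) (hsigma C h)"
  by (intro split_group_hom.intro split_group_hom_axioms.intro group_hom.intro group_hom_axioms.intro)
    (simp_all add: group_Bis group_BijGroup target_perm_hom hsigma_hom target_perm_hsigma carrier_BijGroup)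

end

theorem theorem2:
  fixes C :: "('o, 'm) smallcat" and u :: 'o and h :: "'o \<Rightarrow> 'm"
  assumes "is_groupoid C"
    and "u \<in> Obj C"
    and "\<forall>e\<in>Obj C. h e \<in> Arr C \<and> src C (h e) = e \<and> tgt C (h e) = u"
    and "h u = idm C u"
  shows "group (Bis C)
    \<and> subgroup (Nsub C) (Bis C) \<and> subgroup (Hsub C h) (Bis C)
    \<and> generate (Bis C) (Nsub C \<union> Hsub C h) = carrier (Bis C)
    \<and> (\<forall>x\<in>Hsub C h. restrict (conj_act C x) (Nsub C)
          \<in> iso ((Bis C)\<lparr>carrier := Nsub C\<rparr>) ((Bis C)\<lparr>carrier := Nsub C\<rparr>))
    \<and> (\<forall>n\<in>Nsub C. conj_act C \<one>\<^bsub>Bis C\<^esub> n = n)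
    \<and> (\<forall>x\<in>Hsub C h. \<forall>y\<in>Hsub C h. \<forall>n\<in>Nsub C.
          conj_act C (x \<otimes>\<^bsub>Bis C\<^esub> y) n = conj_act C x (conj_act C y n))
    \<and> Bis C \<cong> semidirect_product ((Bis C)\<lparr>carrier := Nsub C\<rparr>)
                                   ((Bis C)\<lparr>carrier := Hsub C h\<rparr>) (conj_act C)"
proof -
  interpret groupoid_arrows_to_base C u h
    using assms(1,3) by unfold_locales auto
  interpret split: split_group_hom "Bis C" "BijGroup (Obj C)" "target_perm C" "hsigma C h"
    by (rule split_group_hom_target_perm)
  have N_normal: "Nsub C \<lhd> Bis C"
    using split.normal_kernel by (simp add: kernel_target_perm)
  have H_subgroup: "subgroup (Hsub C h) (Bis C)"
    using split.section_image_subgroup by (simp add: Hsub_eq_image)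
  have conj_act: "conj_act C = (\<lambda>x n. x \<otimes>\<^bsub>Bis C\<^esub> n \<otimes>\<^bsub>Bis C\<^esub> inv\<^bsub>Bis C\<^esub> x)"
    by (simp add: conj_act_def fun_eq_iff)
  show ?thesis
    unfolding conj_act
    using group_Bis normal_imp_subgroup[OF N_normal] H_subgroup
      split.generate_kernel_section_image split.iso_semidirect_product
      normal.conjugation_restrict_iso[OF N_normal] subgroup.mem_carrier[OF H_subgroup]
      subgroup.mem_carrier[OF normal_imp_subgroup[OF N_normal]] split.G.conjugation_mult
    by (simp add: kernel_target_perm Hsub_eq_image)
qed

end
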